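(* Let $\mathbf A$ be a modular pseudo-Kleene lattice and $x,y\in A$. The following are equivalent: (1) $x\,\mathrm C\,y$; (2) $y\,\mathrm C\,x$; (3) $x\,\mathrm C\,y'$; (4) $x'\,\mathrm C\,y$; (5) $x\,\mathrm C\,y$ and $(x\lor x')\land(y\lor y')=((x\lor x')\land y)\lor((x\lor x')\land y')$.
   Context: A pseudo-Kleene lattice is an algebra $(A,\land,\lor,{}',0,1)$ that is a bounded lattice with an antitone involution ${}'$ ($x\leq y\Rightarrow y'\leq x'$, $x''=x$) satisfying $x\land x'\leq y\lor y'$; it is modular if its lattice reduct is modular. For $a,b\in A$, $a\,\mathrm C\,b$ means: (C1) $a\land(b\lor b')=(a\land b)\lor(a\land b')$; (C2) $b\land(a\lor a')=(b\land a)\lor(b\land a')$; (C3) $a\land a'=((a\land a')\land b)\lor((a\land a')\land b')$. *)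

theory Defs
  imports Main
begin

class pseudo_kleene_lattice = bounded_lattice +
  fixes cmpl :: "'a \<Rightarrow> 'a"
  assumes cmpl_antitone: "x \<le> y \<Longrightarrow> cmpl y \<le> cmpl x"
    and cmpl_involutive: "cmpl (cmpl x) = x"
    and kleene_cond: "inf x (cmpl x) \<le> sup y (cmpl y)"

class modular_pseudo_kleene_lattice = pseudo_kleene_lattice +
  assumes modular: "x \<le> z \<Longrightarrow> sup x (inf y z) = inf (sup x y) z"

definition commutes :: "'a::pseudo_kleene_lattice \<Rightarrow> 'a \<Rightarrow> bool" where
  "commutes a b \<longleftrightarrow>
     inf a (sup b (cmpl b)) = sup (inf a b) (inf a (cmpl b))
   \<and> inf b (sup a (cmpl a)) = sup (inf b a) (inf b (cmpl a))
   \<and> inf a (cmpl a) = sup (inf (inf a (cmpl a)) b) (inf (inf a (cmpl a)) (cmpl b))"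

end

theory Submission
  imports Defs
begin

(* In a modular lattice a single identity c \<sqinter> (x \<squnion> y) = (c \<sqinter> x) \<squnion> (c \<sqinter> y) already
   implies the one with c and x exchanged and the dual identity.  With De Morgan's laws this makes
   C1 and C2 invariant under complementing either argument, and turns C3 (using
   a \<sqinter> a' \<le> b \<squnion> b') into condition (5).  The real work is the symmetry of C3: with
   u = a \<squnion> a', the Kleene condition gives b \<sqinter> b' = (b \<sqinter> u) \<sqinter> (b' \<sqinter> u); both factors
   split over a, a' by C2, and a \<sqinter> a' splits over the two factors by C3.  In a modular lattice
   these three splittings force the meet of the factors to split over a, a' as well. *)

context lattice
begin

definition meet_distrib :: "'a \<Rightarrow> 'a \<Rightarrow> 'a \<Rightarrow> bool" where
  "meet_distrib c x y \<longleftrightarrow> inf c (sup x y) = sup (inf c x) (inf c y)"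

definition splits :: "'a \<Rightarrow> 'a \<Rightarrow> 'a \<Rightarrow> bool" where
  "splits c x y \<longleftrightarrow> c = sup (inf c x) (inf c y)"

lemma meet_distrib_commute: "meet_distrib c x y \<longleftrightarrow> meet_distrib c y x"
  by (simp add: meet_distrib_def sup_commute)

lemma splits_commute: "splits c x y \<longleftrightarrow> splits c y x"
  by (simp add: splits_def sup_commute)

lemma meet_distrib_iff_splits: "meet_distrib c x y \<longleftrightarrow> splits (inf c (sup x y)) x y"
proof -
  have "inf (inf c (sup x y)) x = inf c x" "inf (inf c (sup x y)) y = inf c y"
    by (simp_all add: inf.absorb2 inf_assoc)
  then show ?thesis
    by (simp add: meet_distrib_def splits_def)
qed

end

class modular_lattice = lattice +
  assumes modular_law: "x \<le> z \<Longrightarrow> sup x (inf y z) = inf (sup x y) z"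
begin

lemma meet_distrib_swap:
  assumes "meet_distrib x y z"
  shows "meet_distrib y x z"
proof -
  have "inf y (sup x z) = inf y (inf (sup z x) (sup y z))"
    by (metis inf.absorb1 inf.left_commute sup.cobounded1 sup.commute)
  also have "\<dots> = inf y (sup z (inf x (sup y z)))"
    using modular_law[of z "sup y z" x] by (simp add: inf_commute)
  also have "\<dots> = inf y (sup z (sup (inf x y) (inf x z)))"
    using assms by (simp add: meet_distrib_def)
  also have "\<dots> = inf y (sup (inf x y) (sup z (inf x z)))"
    by (metis sup_left_commute)
  also have "\<dots> = inf y (sup (inf x y) z)"
    by (simp add: sup.absorb1)
  also have "\<dots> = sup (inf y x) (inf y z)"
    using modular_law[of "inf x y" y z] by (simp add: inf_commute)
  finally show ?thesis
    by (simp add: meet_distrib_def)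
qed

lemma meet_distrib_imp_join_distrib:
  assumes "meet_distrib x y z"
  shows "sup x (inf y z) = inf (sup x y) (sup x z)"
proof -
  have "inf (sup x y) (sup x z) = sup x (inf y (sup x z))"
    using modular_law[of x "sup x z" y] by simp
  also have "\<dots> = sup x (sup (inf y x) (inf y z))"
    using meet_distrib_swap[OF assms] by (simp add: meet_distrib_def)
  also have "\<dots> = sup x (inf y z)"
    by (simp add: sup.absorb1 sup_assoc[symmetric])
  finally show ?thesis ..
qed

lemma splits_inf:
  assumes c1: "splits c1 x y" and c2: "splits c2 x y" and xy: "splits (inf x y) c1 c2"
  shows "splits (inf c1 c2) x y"
proof -
  define q a1 a2 p1 p2 where "q = inf c1 c2" and "a1 = inf c1 x" and "a2 = inf c2 x"
    and "p1 = inf (inf x y) c1" and "p2 = inf (inf x y) c2"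
  have "p1 \<le> a1"
    by (simp add: p1_def a1_def le_infI1)
  have "inf a1 (sup a2 y) = inf a1 (inf x (sup a2 y))"
    by (simp add: a1_def inf_assoc)
  also have "\<dots> = inf a1 (sup a2 (inf x y))"
    using modular_law[of a2 x y] by (simp add: a2_def inf_commute)
  also have "\<dots> = inf a1 (sup p1 (sup a2 p2))"
    using xy unfolding splits_def p1_def p2_def by (metis sup_left_commute)
  also have "\<dots> = sup p1 (inf a1 (sup a2 p2))"
    using modular_law[OF \<open>p1 \<le> a1\<close>, of "sup a2 p2"] by (simp add: inf_commute)
  also have "\<dots> \<le> sup y (inf q x)"
    by (intro sup_mono) (auto simp: p1_def q_def a1_def a2_def p2_def intro: le_infI1 le_infI2)
  finally have a1_le: "inf a1 (sup a2 y) \<le> sup y (inf q x)" .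
  have "c1 \<le> sup a1 y" "c2 \<le> sup a2 y"
    using c1 c2 unfolding splits_def a1_def a2_def by (metis inf.cobounded2 sup.mono order_refl)+
  then have "q \<le> inf (sup a1 y) (sup a2 y)"
    unfolding q_def by (rule inf_mono)
  also have "\<dots> = sup y (inf a1 (sup a2 y))"
    using modular_law[of y "sup a2 y" a1] by (simp add: sup_commute)
  also have "\<dots> \<le> sup (inf q x) y"
    using a1_le by (simp add: le_supI2 sup_commute)
  finally have "q = inf q (sup (inf q x) y)"
    by (simp add: inf.absorb1)
  also have "\<dots> = sup (inf q x) (inf y q)"
    using modular_law[of "inf q x" q y] by (simp add: inf_commute)
  finally show ?thesis
    by (simp add: splits_def q_def inf_commute)
qed

end

context pseudo_kleene_lattice
begin

lemma cmpl_inject: "cmpl x = cmpl y \<longleftrightarrow> x = y"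
  by (metis cmpl_involutive)

lemma cmpl_sup: "cmpl (sup x y) = inf (cmpl x) (cmpl y)"
proof (rule order.antisym)
  show "cmpl (sup x y) \<le> inf (cmpl x) (cmpl y)"
    by (simp add: cmpl_antitone)
  have "sup x y \<le> cmpl (inf (cmpl x) (cmpl y))"
    by (metis cmpl_antitone cmpl_involutive inf.cobounded1 inf.cobounded2 sup.bounded_iff)
  then show "inf (cmpl x) (cmpl y) \<le> cmpl (sup x y)"
    by (metis cmpl_antitone cmpl_involutive)
qed

lemma cmpl_inf: "cmpl (inf x y) = sup (cmpl x) (cmpl y)"
proof -
  have "cmpl (sup (cmpl x) (cmpl y)) = inf x y"
    by (simp add: cmpl_sup cmpl_involutive)
  then show ?thesis
    by (metis cmpl_involutive)
qed

lemma meet_distrib_cmpl_iff: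
  "meet_distrib (cmpl x) (cmpl y) (cmpl z) \<longleftrightarrow> sup x (inf y z) = inf (sup x y) (sup x z)"
proof -
  have "meet_distrib (cmpl x) (cmpl y) (cmpl z) \<longleftrightarrow>
      cmpl (sup x (inf y z)) = cmpl (inf (sup x y) (sup x z))"
    by (simp add: meet_distrib_def cmpl_sup cmpl_inf)
  then show ?thesis
    by (simp add: cmpl_inject)
qed

end

context modular_pseudo_kleene_lattice
begin

subclass modular_lattice
  by standard (fact modular)

lemma meet_distrib_cmpl: "meet_distrib x y z \<Longrightarrow> meet_distrib (cmpl x) (cmpl y) (cmpl z)"
  by (rule meet_distrib_cmpl_iff[THEN iffD2, OF meet_distrib_imp_join_distrib])

lemma meet_distrib_cmpl_left:
  assumes "meet_distrib b a (cmpl a)"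
  shows "meet_distrib (cmpl b) a (cmpl a)"
proof -
  have "meet_distrib (cmpl b) (cmpl a) a"
    using meet_distrib_cmpl[OF assms] by (simp add: cmpl_involutive)
  then show ?thesis
    by (simp add: meet_distrib_commute)
qed

end

lemma commutes_iff:
  "commutes a b \<longleftrightarrow>
     meet_distrib a b (cmpl b) \<and> meet_distrib b a (cmpl a) \<and> splits (inf a (cmpl a)) b (cmpl b)"
  by (simp add: commutes_def meet_distrib_def splits_def)

lemma splits_inf_cmpl_swap:
  fixes a b :: "'a::modular_pseudo_kleene_lattice"
  assumes c2: "meet_distrib b a (cmpl a)" and c3: "splits (inf a (cmpl a)) b (cmpl b)"
  shows "splits (inf b (cmpl b)) a (cmpl a)"
proof -
  let ?u = "sup a (cmpl a)"
  have "splits (inf b ?u) a (cmpl a)"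
    using c2 meet_distrib_iff_splits by blast
  moreover have "splits (inf (cmpl b) ?u) a (cmpl a)"
    using meet_distrib_cmpl_left[OF c2] meet_distrib_iff_splits by blast
  moreover have "splits (inf a (cmpl a)) (inf b ?u) (inf (cmpl b) ?u)"
  proof -
    have "inf (inf a (cmpl a)) (inf c ?u) = inf (inf a (cmpl a)) c" for c
    proof -
      have "inf (inf a (cmpl a)) (inf c ?u) = inf c (inf (inf a (cmpl a)) ?u)"
        by (rule inf.left_commute)
      also have "inf (inf a (cmpl a)) ?u = inf a (cmpl a)"
        by (simp add: inf.absorb1 le_infI1)
      finally show ?thesis
        by (simp add: inf_commute)
    qed
    then show ?thesis
      using c3 by (simp add: splits_def)
  qed
  ultimately have "splits (inf (inf b ?u) (inf (cmpl b) ?u)) a (cmpl a)"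
    by (rule splits_inf)
  moreover have "inf (inf b ?u) (inf (cmpl b) ?u) = inf (inf b (cmpl b)) ?u"
    by (simp add: inf_aci)
  moreover have "\<dots> = inf b (cmpl b)"
    using kleene_cond[of b a] by (rule inf.absorb1)
  ultimately show ?thesis
    by simp
qed

lemma meet_distrib_sup_cmpl:
  fixes a b :: "'a::modular_pseudo_kleene_lattice"
  assumes "splits (inf a (cmpl a)) b (cmpl b)"
  shows "meet_distrib (sup a (cmpl a)) b (cmpl b)"
proof -
  have "meet_distrib (inf a (cmpl a)) b (cmpl b)"
    using assms meet_distrib_iff_splits[of "inf a (cmpl a)" b "cmpl b"]
    by (simp add: inf.absorb1 kleene_cond)
  then have "meet_distrib (cmpl (inf a (cmpl a))) (cmpl b) (cmpl (cmpl b))"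
    by (rule meet_distrib_cmpl)
  then have "meet_distrib (sup (cmpl a) a) (cmpl b) b"
    by (simp add: cmpl_inf cmpl_involutive)
  then show ?thesis
    by (metis sup_commute meet_distrib_commute)
qed

lemma commutes_sym:
  fixes a b :: "'a::modular_pseudo_kleene_lattice"
  shows "commutes a b \<Longrightarrow> commutes b a"
  unfolding commutes_iff using splits_inf_cmpl_swap by blast

lemma commutes_cmpl_right:
  fixes a b :: "'a::modular_pseudo_kleene_lattice"
  assumes "commutes a b"
  shows "commutes a (cmpl b)"
proof -
  have c1: "meet_distrib a b (cmpl b)" and c2: "meet_distrib b a (cmpl a)"
    and c3: "splits (inf a (cmpl a)) b (cmpl b)"
    using assms by (simp_all add: commutes_iff)
  have "meet_distrib a (cmpl b) (cmpl (cmpl b))"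
    using c1 by (simp add: cmpl_involutive meet_distrib_commute)
  moreover have "meet_distrib (cmpl b) a (cmpl a)"
    using c2 by (rule meet_distrib_cmpl_left)
  moreover have "splits (inf a (cmpl a)) (cmpl b) (cmpl (cmpl b))"
    using c3 by (simp add: cmpl_involutive splits_commute)
  ultimately show ?thesis
    by (simp add: commutes_iff)
qed

lemma commutes_cmpl_left:
  fixes a b :: "'a::modular_pseudo_kleene_lattice"
  assumes "commutes a b"
  shows "commutes (cmpl a) b"
proof -
  have c1: "meet_distrib a b (cmpl b)" and c2: "meet_distrib b a (cmpl a)"
    and c3: "splits (inf a (cmpl a)) b (cmpl b)"
    using assms by (simp_all add: commutes_iff)
  have "meet_distrib (cmpl a) b (cmpl b)"
    using c1 by (rule meet_distrib_cmpl_left)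
  moreover have "meet_distrib b (cmpl a) (cmpl (cmpl a))"
    using c2 by (simp add: cmpl_involutive meet_distrib_commute)
  moreover have "splits (inf (cmpl a) (cmpl (cmpl a))) b (cmpl b)"
    using c3 by (simp add: cmpl_involutive inf_commute)
  ultimately show ?thesis
    by (simp add: commutes_iff)
qed

theorem lemma4p13:
  fixes x y :: "'a::modular_pseudo_kleene_lattice"
  shows "(commutes x y \<longleftrightarrow> commutes y x)
       \<and> (commutes x y \<longleftrightarrow> commutes x (cmpl y))
       \<and> (commutes x y \<longleftrightarrow> commutes (cmpl x) y)
       \<and> (commutes x y \<longleftrightarrow>
            (commutes x y \<and>
             inf (sup x (cmpl x)) (sup y (cmpl y))
               = sup (inf (sup x (cmpl x)) y) (inf (sup x (cmpl x)) (cmpl y))))"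
proof -
  have "commutes x y \<longleftrightarrow> commutes y x"
    using commutes_sym by blast
  moreover have "commutes x y \<longleftrightarrow> commutes x (cmpl y)"
    by (metis commutes_cmpl_right cmpl_involutive)
  moreover have "commutes x y \<longleftrightarrow> commutes (cmpl x) y"
    by (metis commutes_cmpl_left cmpl_involutive)
  moreover have "commutes x y \<Longrightarrow> meet_distrib (sup x (cmpl x)) y (cmpl y)"
    by (simp add: commutes_iff meet_distrib_sup_cmpl)
  ultimately show ?thesis
    unfolding meet_distrib_def by blast
qed

end
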